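(* Let $\eta>0$, $\beta\in\mathbb{R}$, and let $\widehat{\mathcal{L}}\in\mathbb{R}^{N\times N}$ satisfy $\langle\widehat{\mathcal{L}}\mathbf{x},\mathbf{x}\rangle\le0$ for all $\mathbf{x}\in\mathbb{R}^N$. For $\gamma>0$ define $$\mathcal{P}_\gamma:=\left[(\eta^2+\beta^2)I-2\eta\widehat{\mathcal{L}}+\widehat{\mathcal{L}}^2\right](\eta I-\widehat{\mathcal{L}})^{-1}(\gamma I-\widehat{\mathcal{L}})^{-1}.$$ With $\gamma_*:=\eta+\frac{\beta^2}{\eta}$, the two-norm condition number satisfies $$\kappa(\mathcal{P}_{\gamma_*})\le 1+\frac{\beta^2}{2\eta^2}.$$
   Context: $\langle\cdot,\cdot\rangle$ is the Euclidean inner product on $\mathbb{R}^N$; $\kappa(A)=\|A\|\,\|A^{-1}\|$ with the operator two-norm. $\mathcal{P}_\gamma$ is the Schur complement $\eta I-\widehat{\mathcal{L}}+\beta^2(\eta I-\widehat{\mathcal{L}})^{-1}$ right-preconditioned by $(\gamma I-\widehat{\mathcal{L}})^{-1}$. *)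

theory Defs
  imports "HOL-Analysis.Analysis"
begin

definition cond2 :: "real^'n^'n \<Rightarrow> real" where
  "cond2 A = onorm (\<lambda>x. A *v x) * onorm (\<lambda>x. matrix_inv A *v x)"

definition Pgamma :: "real \<Rightarrow> real \<Rightarrow> real \<Rightarrow> real^'n^'n \<Rightarrow> real^'n^'n" where
  "Pgamma \<eta> \<beta> \<gamma> L =
     (mat (\<eta>^2 + \<beta>^2) - (2 * \<eta>) *\<^sub>R L + L ** L)
       ** matrix_inv (mat \<eta> - L) ** matrix_inv (mat \<gamma> - L)"

end

theory Submission
  imports Defs
begin

text \<open>Put c = \<eta>^2 + \<beta>^2, \<delta> = \<beta>^2/\<eta> and Q(a) = c I - a L + L^2. The choice
  \<gamma> = \<eta> + \<delta> makes \<gamma> \<eta> = c, so (\<gamma> I - L)(\<eta> I - L) = Q(2\<eta> + \<delta>) and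
  P = Q(2\<eta>) Q(2\<eta> + \<delta>)^-1. For dissipative L and c \<ge> 0 one has
  \<langle>Q(a) z, L z\<rangle> \<le> -a |L z|^2. By Cauchy-Schwarz this gives a |L z| \<le> |Q(a) z|, and since
  Q(a') z = Q(a) z - (a' - a) L z it also gives |Q(a) z| \<le> |Q(a') z| for a \<le> a'. The second
  bound shows |P| \<le> 1; the first bounds P^-1 = I - \<delta> L Q(2\<eta>)^-1 by 1 + \<delta>/(2\<eta>).\<close>

definition dissipative :: "real^'n^'n \<Rightarrow> bool" where
  "dissipative L \<longleftrightarrow> (\<forall>x. (L *v x) \<bullet> x \<le> 0)"

definition mat_quadratic :: "real \<Rightarrow> real \<Rightarrow> real^'n^'n \<Rightarrow> real^'n^'n" where
  "mat_quadratic c a L = mat c - a *\<^sub>R L + L ** L"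

lemma mat_vector_mult: "(mat k :: real^'n^'n) *v x = k *\<^sub>R x"
  by (simp add: mat_def matrix_vector_mult_def vec_eq_iff if_distrib if_distribR cong: if_cong)

lemma matrix_inv_works:
  fixes A :: "'a::semiring_1^'n^'m"
  assumes "invertible A"
  shows "A ** matrix_inv A = mat 1" "matrix_inv A ** A = mat 1"
  using someI_ex[OF assms[unfolded invertible_def]] by (simp_all add: matrix_inv_def)

lemma matrix_inv_unique:
  fixes A B :: "'a::field^'n^'n"
  assumes "A ** B = mat 1"
  shows "matrix_inv A = B"
proof -
  have "invertible A"
    using assms invertible_right_inverse by blast
  then have "matrix_inv A = matrix_inv A ** (A ** B)"
    by (simp add: assms)
  also have "\<dots> = B"
    by (simp add: matrix_mul_assoc matrix_inv_works \<open>invertible A\<close>)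
  finally show ?thesis .
qed

lemma matrix_inv_mult:
  fixes A B :: "'a::field^'n^'n"
  assumes "invertible A" "invertible B"
  shows "matrix_inv (A ** B) = matrix_inv B ** matrix_inv A"
proof (rule matrix_inv_unique)
  have "A ** B ** (matrix_inv B ** matrix_inv A) = A ** (B ** matrix_inv B) ** matrix_inv A"
    by (simp add: matrix_mul_assoc)
  then show "A ** B ** (matrix_inv B ** matrix_inv A) = mat 1"
    by (simp add: matrix_inv_works assms)
qed

lemma cond2_le:
  fixes M :: "real^'n^'n"
  assumes "\<And>x. norm (M *v x) \<le> a * norm x"
    and "\<And>x. norm (matrix_inv M *v x) \<le> b * norm x"
  shows "cond2 M \<le> a * b"
proof -
  have "onorm ((*v) M) \<le> a" "onorm ((*v) (matrix_inv M)) \<le> b"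
    using assms by (simp_all add: onorm_le)
  moreover have "0 \<le> onorm ((*v) M)" "0 \<le> onorm ((*v) (matrix_inv M))"
    by (simp_all add: onorm_pos_le matrix_vector_mul_bounded_linear)
  ultimately show ?thesis
    unfolding cond2_def by (meson mult_mono order_trans)
qed

lemma invertible_if_coercive:
  fixes A :: "real^'n^'n"
  assumes "t > 0" and "\<And>x. t * (x \<bullet> x) \<le> (A *v x) \<bullet> x"
  shows "invertible A"
  unfolding invertible_left_inverse matrix_left_invertible_ker
proof (intro allI impI)
  fix x assume "A *v x = 0"
  then have "t * (x \<bullet> x) \<le> 0" using assms(2)[of x] by simp
  with \<open>t > 0\<close> have "x \<bullet> x \<le> 0"
    by (simp add: mult_le_0_iff)
  then show "x = 0"
    by (metis antisym inner_ge_zero inner_eq_zero_iff)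
qed

lemma dissipative_invertible_shift:
  assumes "dissipative L" and "t > 0"
  shows "invertible (mat t - L)"
proof (rule invertible_if_coercive[OF \<open>t > 0\<close>])
  show "t * (x \<bullet> x) \<le> ((mat t - L) *v x) \<bullet> x" for x
    using assms(1)
    by (simp add: dissipative_def matrix_vector_mult_diff_rdistrib mat_vector_mult inner_diff_left)
qed

lemma mat_quadratic_vector_mult:
  "mat_quadratic c a L *v x = c *\<^sub>R x - a *\<^sub>R (L *v x) + L *v (L *v x)"
  by (simp add: mat_quadratic_def matrix_vector_mult_diff_rdistrib matrix_vector_mult_add_rdistrib
      mat_vector_mult matrix_vector_mul_assoc scaleR_matrix_vector_assoc)

lemma mat_quadratic_vector_mult_diff:
  "mat_quadratic c a' L *v x = mat_quadratic c a L *v x - (a' - a) *\<^sub>R (L *v x)"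
  by (simp add: mat_quadratic_vector_mult algebra_simps)

lemma shift_mult_shift:
  fixes L :: "real^'n^'n"
  shows "(mat s - L) ** (mat t - L) = mat_quadratic (s * t) (s + t) L"
  unfolding matrix_eq
  by (simp add: mat_quadratic_vector_mult matrix_vector_mul_assoc[symmetric]
      mat_vector_mult algebra_simps)

lemma inner_mat_quadratic_le:
  assumes "dissipative L" and "c \<ge> 0"
  shows "(mat_quadratic c a L *v z) \<bullet> (L *v z) \<le> - a * (norm (L *v z))\<^sup>2"
proof -
  have "c * ((L *v z) \<bullet> z) \<le> 0" "(L *v (L *v z)) \<bullet> (L *v z) \<le> 0"
    using assms by (simp_all add: dissipative_def mult_nonneg_nonpos)
  moreover have "(mat_quadratic c a L *v z) \<bullet> (L *v z)
      = c * ((L *v z) \<bullet> z) - a * (norm (L *v z))\<^sup>2 + (L *v (L *v z)) \<bullet> (L *v z)"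
    by (simp add: mat_quadratic_vector_mult inner_diff_left inner_add_left
        inner_commute[of z "L *v z"] power2_norm_eq_inner)
  ultimately show ?thesis
    by linarith
qed

lemma norm_mat_quadratic_ge:
  assumes "dissipative L" and "c \<ge> 0" and "a \<ge> 0"
  shows "a * norm (L *v z) \<le> norm (mat_quadratic c a L *v z)"
proof -
  let ?y = "L *v z" and ?q = "mat_quadratic c a L *v z"
  have "a * norm ?y * norm ?y \<le> - (?q \<bullet> ?y)"
    using inner_mat_quadratic_le[OF assms(1,2), of a z] by (simp add: power2_eq_square)
  also have "\<dots> \<le> norm ?q * norm ?y"
    using norm_cauchy_schwarz[of "- ?q" ?y] by simp
  finally show ?thesis
    by (cases "?y = 0") simp_all
qed

lemma norm_mat_quadratic_mono:
  assumes "dissipative L" and "c \<ge> 0" and "a \<ge> 0" and "a \<le> a'"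
  shows "norm (mat_quadratic c a L *v z) \<le> norm (mat_quadratic c a' L *v z)"
proof -
  let ?y = "L *v z" and ?q = "mat_quadratic c a L *v z"
  have "?q \<bullet> ?y \<le> 0"
    using inner_mat_quadratic_le[OF assms(1,2), of a z]
      mult_nonneg_nonneg[OF assms(3) zero_le_power2[of "norm ?y"]]
    by linarith
  then have "0 \<le> 2 * ((a' - a) * - (?q \<bullet> ?y)) + (a' - a)\<^sup>2 * (?y \<bullet> ?y)"
    using assms(4) by (intro add_nonneg_nonneg mult_nonneg_nonneg) simp_all
  also have "\<dots> = (?q - (a' - a) *\<^sub>R ?y) \<bullet> (?q - (a' - a) *\<^sub>R ?y) - ?q \<bullet> ?q"
    by (simp add: inner_diff_left inner_diff_right inner_commute[of ?y ?q] power2_eq_square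
        algebra_simps)
  finally have "?q \<bullet> ?q \<le> (?q - (a' - a) *\<^sub>R ?y) \<bullet> (?q - (a' - a) *\<^sub>R ?y)"
    by simp
  then show ?thesis
    by (simp add: norm_le mat_quadratic_vector_mult_diff[of c a' L z a])
qed

lemma dissipative_invertible_mat_quadratic:
  assumes "dissipative L" and "c > 0" and "a > 0"
  shows "invertible (mat_quadratic c a L)"
  unfolding invertible_left_inverse matrix_left_invertible_ker
proof (intro allI impI)
  fix x assume q0: "mat_quadratic c a L *v x = 0"
  then have "L *v x = 0"
    using norm_mat_quadratic_ge[OF assms(1), of c a x] assms(2,3) by (simp add: mult_le_0_iff)
  with q0 show "x = 0"
    using \<open>c > 0\<close> by (simp add: mat_quadratic_vector_mult)
qed

lemma cond2_mat_quadratic_ratio: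
  fixes L :: "real^'n^'n"
  assumes "dissipative L" and "c > 0" and "a > 0" and "a \<le> a'"
  shows "cond2 (mat_quadratic c a L ** matrix_inv (mat_quadratic c a' L)) \<le> 1 + (a' - a) / a"
proof -
  let ?Q = "mat_quadratic c a L" and ?Q' = "mat_quadratic c a' L"
  have inv: "invertible ?Q" "invertible ?Q'"
    using assms by (simp_all add: dissipative_invertible_mat_quadratic)
  have P_inv: "matrix_inv (?Q ** matrix_inv ?Q') = ?Q' ** matrix_inv ?Q"
  proof (rule matrix_inv_unique)
    have "?Q ** matrix_inv ?Q' ** (?Q' ** matrix_inv ?Q)
        = ?Q ** (matrix_inv ?Q' ** ?Q') ** matrix_inv ?Q"
      by (simp add: matrix_mul_assoc)
    then show "?Q ** matrix_inv ?Q' ** (?Q' ** matrix_inv ?Q) = mat 1"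
      by (simp add: matrix_inv_works inv)
  qed
  have "cond2 (?Q ** matrix_inv ?Q') \<le> 1 * (1 + (a' - a) / a)"
  proof (rule cond2_le)
    show "norm ((?Q ** matrix_inv ?Q') *v x) \<le> 1 * norm x" for x
      using norm_mat_quadratic_mono[OF assms(1), of c a a' "matrix_inv ?Q' *v x"] assms
      by (simp add: matrix_vector_mul_assoc matrix_inv_works inv)
    show "norm (matrix_inv (?Q ** matrix_inv ?Q') *v x) \<le> (1 + (a' - a) / a) * norm x" for x
    proof -
      define z where "z = matrix_inv ?Q *v x"
      have x: "?Q *v z = x"
        by (simp add: z_def matrix_vector_mul_assoc matrix_inv_works inv)
      have "matrix_inv (?Q ** matrix_inv ?Q') *v x = ?Q' *v z"
        by (simp add: P_inv z_def matrix_vector_mul_assoc)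
      also have "\<dots> = x - (a' - a) *\<^sub>R (L *v z)"
        by (simp only: mat_quadratic_vector_mult_diff[of c a' L z a] x)
      finally have "norm (matrix_inv (?Q ** matrix_inv ?Q') *v x)
          \<le> norm x + (a' - a) * norm (L *v z)"
        using norm_triangle_ineq4[of x "(a' - a) *\<^sub>R (L *v z)"] assms(4) by simp
      also have "(a' - a) * norm (L *v z) \<le> (a' - a) * (norm x / a)"
        using norm_mat_quadratic_ge[OF assms(1), of c a z] assms x
        by (intro mult_left_mono) (simp_all add: field_simps)
      finally show ?thesis
        by (simp add: algebra_simps)
    qed
  qed
  then show ?thesis
    by simp
qed

theorem corollary2:
  fixes L :: "real^'n^'n" and \<eta> \<beta> :: real
  assumes "\<eta> > 0"
    and "\<forall>x. (L *v x) \<bullet> x \<le> 0"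
  shows "cond2 (Pgamma \<eta> \<beta> (\<eta> + \<beta>^2 / \<eta>) L) \<le> 1 + \<beta>^2 / (2 * \<eta>^2)"
proof -
  define \<gamma> where "\<gamma> = \<eta> + \<beta>^2 / \<eta>"
  have L: "dissipative L"
    using assms(2) by (simp add: dissipative_def)
  have "\<gamma> > 0"
    using assms(1) by (simp add: \<gamma>_def add_pos_nonneg)
  have \<gamma>: "\<gamma> * \<eta> = \<eta>^2 + \<beta>^2" "\<gamma> + \<eta> = 2 * \<eta> + \<beta>^2 / \<eta>"
    using assms(1) by (simp_all add: \<gamma>_def field_simps power2_eq_square)
  have "Pgamma \<eta> \<beta> \<gamma> L
      = mat_quadratic (\<eta>^2 + \<beta>^2) (2 * \<eta>) L ** matrix_inv ((mat \<gamma> - L) ** (mat \<eta> - L))"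
    using dissipative_invertible_shift[OF L] \<open>\<gamma> > 0\<close> assms(1)
    by (simp add: Pgamma_def mat_quadratic_def matrix_inv_mult matrix_mul_assoc)
  also have "\<dots> = mat_quadratic (\<eta>^2 + \<beta>^2) (2 * \<eta>) L
      ** matrix_inv (mat_quadratic (\<eta>^2 + \<beta>^2) (2 * \<eta> + \<beta>^2 / \<eta>) L)"
    by (simp only: shift_mult_shift \<gamma>)
  finally have P: "Pgamma \<eta> \<beta> \<gamma> L = \<dots>" .
  have "cond2 (mat_quadratic (\<eta>^2 + \<beta>^2) (2 * \<eta>) L
      ** matrix_inv (mat_quadratic (\<eta>^2 + \<beta>^2) (2 * \<eta> + \<beta>^2 / \<eta>) L))
      \<le> 1 + (2 * \<eta> + \<beta>^2 / \<eta> - 2 * \<eta>) / (2 * \<eta>)"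
    by (rule cond2_mat_quadratic_ratio[OF L]) (use assms(1) in \<open>simp_all add: add_pos_nonneg\<close>)
  also have "\<dots> = 1 + \<beta>^2 / (2 * \<eta>^2)"
    by (simp add: power2_eq_square)
  finally show ?thesis
    unfolding \<gamma>_def[symmetric] P .
qed

end
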